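(* Let $X$ be a topological space with $|X|\ge 2$ and $G$ an infinite Abelian group. If $X$ admits a non-constant continuous real-valued function, then every Korovin orbit $G_f$ in $X^G$ is functionally Hausdorff.
   Context: $X^G$ carries the product topology. For $f\in X^G$ and $g\in G$ let $gf\in X^G$ be given by $(gf)(x)=f(xg)$, and let $G_f=\{gf:g\in G\}\subseteq X^G$ with the subspace topology. The map $f\colon G\to X$ is a Korovin mapping if $\pi_M(G_f)=X^M$ for every countable $M\subseteq G$, where $\pi_M\colon X^G\to X^M$ is the projection; in that case $G_f$ is called a Korovin orbit. A space is functionally Hausdorff if continuous real-valued functions on it separate its points. *)

theory Defs
  imports "HOL-Analysis.Analysis"
begin

definition shift_act :: "'g::ab_group_add \<Rightarrow> ('g \<Rightarrow> 'a) \<Rightarrow> ('g \<Rightarrow> 'a)" where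
  "shift_act g f = (\<lambda>x. f (x + g))"

definition orbit_of :: "('g::ab_group_add \<Rightarrow> 'a) \<Rightarrow> ('g \<Rightarrow> 'a) set" where
  "orbit_of f = range (\<lambda>g. shift_act g f)"

definition power_top :: "'a topology \<Rightarrow> ('g \<Rightarrow> 'a) topology" where
  "power_top X = product_topology (\<lambda>_. X) UNIV"

definition korovin_mapping :: "'a topology \<Rightarrow> ('g::ab_group_add \<Rightarrow> 'a) \<Rightarrow> bool" where
  "korovin_mapping X f \<longleftrightarrow> (\<forall>x. f x \<in> topspace X) \<and>
     (\<forall>M. countable M \<longrightarrow>
        (\<lambda>h. restrict h M) ` orbit_of f = PiE M (\<lambda>_. topspace X))"

definition functionally_hausdorff :: "'a topology \<Rightarrow> bool" where
  "functionally_hausdorff T \<longleftrightarrow>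
     (\<forall>x\<in>topspace T. \<forall>y\<in>topspace T. x \<noteq> y \<longrightarrow>
        (\<exists>h. continuous_map T euclideanreal h \<and> h x \<noteq> h y))"

end

theory Submission
  imports Defs
begin

text \<open>Two distinct points \<open>g f\<close> and \<open>g' f\<close> of a Korovin orbit differ by \<open>d = g' - g \<noteq> 0\<close>.
  Applying the Korovin property to \<open>M = {0, d}\<close> yields \<open>k\<close> with \<open>f k = a\<close> and \<open>f (d + k) = b\<close>
  for any prescribed \<open>a, b\<close>; so at the coordinate \<open>k - g\<close> the two orbit points take the values
  \<open>a\<close> and \<open>b\<close>. Choosing \<open>a, b\<close> with \<open>h a \<noteq> h b\<close> for a continuous \<open>h : X \<rightarrow> \<real>\<close>, the map
  \<open>u \<mapsto> h (u (k - g))\<close> is continuous on the orbit and separates the two points.\<close>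

lemma korovin_mapping_realises:
  assumes "korovin_mapping X f" and "countable M" and "w \<in> M \<rightarrow>\<^sub>E topspace X"
  obtains k where "\<And>i. i \<in> M \<Longrightarrow> f (i + k) = w i"
proof -
  have "w \<in> (\<lambda>u. restrict u M) ` orbit_of f"
    using assms unfolding korovin_mapping_def by blast
  then obtain k where k: "restrict (shift_act k f) M = w"
    unfolding orbit_of_def by auto
  show thesis
  proof (rule that)
    fix i assume "i \<in> M"
    then show "f (i + k) = w i"
      using fun_cong[OF k, of i] by (simp add: shift_act_def)
  qed
qed

lemma korovin_orbit_coordinate_values:
  assumes "korovin_mapping X f" and "g \<noteq> g'"
    and "a \<in> topspace X" and "b \<in> topspace X"
  obtains x where "shift_act g f x = a" and "shift_act g' f x = b"
proof -
  define d where "d = g' - g"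
  have "d \<noteq> 0" using assms(2) by (simp add: d_def)
  define w where "w = (\<lambda>i. if i = 0 then a else if i = d then b else undefined)"
  have w: "w \<in> {0, d} \<rightarrow>\<^sub>E topspace X"
    using assms(3,4) \<open>d \<noteq> 0\<close> by (auto simp: w_def PiE_def extensional_def)
  obtain k where k: "\<And>i. i \<in> {0, d} \<Longrightarrow> f (i + k) = w i"
    using korovin_mapping_realises[OF assms(1) countable_finite[of "{0, d}"] w] by blast
  have "shift_act g f (k - g) = a"
    using k[of 0] by (simp add: shift_act_def w_def)
  moreover have "shift_act g' f (k - g) = b"
    using k[of d] \<open>d \<noteq> 0\<close> by (simp add: shift_act_def w_def d_def algebra_simps)
  ultimately show thesis by (rule that)
qed

lemma continuous_map_power_top_eval: "continuous_map (power_top X) X (\<lambda>u. u x)"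
  unfolding power_top_def by (rule continuous_map_product_projection) simp

theorem proposition4p3:
  fixes X :: "'a topology" and f :: "'g::ab_group_add \<Rightarrow> 'a"
  assumes "infinite (UNIV :: 'g set)"
    and "\<exists>a\<in>topspace X. \<exists>b\<in>topspace X. a \<noteq> b"
    and "\<exists>h. continuous_map X euclideanreal h \<and>
           (\<exists>a\<in>topspace X. \<exists>b\<in>topspace X. h a \<noteq> h b)"
    and "korovin_mapping X f"
  shows "functionally_hausdorff (subtopology (power_top X) (orbit_of f))"
  unfolding functionally_hausdorff_def
proof (intro ballI impI)
  obtain h a b where h: "continuous_map X euclideanreal h"
    and a: "a \<in> topspace X" and b: "b \<in> topspace X" and "h a \<noteq> h b"
    using assms(3) by blast
  fix u v
  assume "u \<in> topspace (subtopology (power_top X) (orbit_of f))"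
    and "v \<in> topspace (subtopology (power_top X) (orbit_of f))" and "u \<noteq> v"
  then obtain g g' where u: "u = shift_act g f" and v: "v = shift_act g' f" and "g \<noteq> g'"
    unfolding topspace_subtopology orbit_of_def by blast
  obtain x where "shift_act g f x = a" and "shift_act g' f x = b"
    using korovin_orbit_coordinate_values[OF assms(4) \<open>g \<noteq> g'\<close> a b] .
  then have "u x = a" and "v x = b"
    using u v by simp_all
  moreover have "continuous_map (subtopology (power_top X) (orbit_of f)) euclideanreal (\<lambda>u. h (u x))"
    by (rule continuous_map_from_subtopology,
        rule continuous_map_compose[OF continuous_map_power_top_eval h, unfolded o_def])
  ultimately show "\<exists>h. continuous_map (subtopology (power_top X) (orbit_of f)) euclideanreal h \<and> h u \<noteq> h v"
    using \<open>h a \<noteq> h b\<close> by (intro exI[of _ "\<lambda>u. h (u x)"]) simp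
qed

end
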